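(* Let $-D/2\le x_{\rm I}<x_{\rm F}\le D/2$, and let $(r_1^{\rm I},r_2^{\rm I})\in\partial\mathcal{C}_f(x_{\rm I})$ and $(r_1^{\rm F},r_2^{\rm F})\in\partial\mathcal{C}_f(x_{\rm F})$ be the points at which the upper-right common tangent line of $\mathcal{C}_f(x_{\rm I})$ and $\mathcal{C}_f(x_{\rm F})$ (the supporting line of $\mathrm{Conv}(\mathcal{C}_f(x_{\rm I})\cup\mathcal{C}_f(x_{\rm F}))$ touching both sets) touches them. Define the triangle region $$\mathcal{C}_{\rm IF}=\left\{(r_1,r_2): r_2\le k_{\rm IF}(r_1-r_1^{\rm I})+r_2^{\rm I},\ r_1\ge0,\ r_2\ge0\right\},\qquad k_{\rm IF}=\frac{r_2^{\rm I}-r_2^{\rm F}}{r_1^{\rm I}-r_1^{\rm F}}.$$ Then for any location $x\in[x_{\rm I},x_{\rm F}]$, $\mathcal{C}_f(x)\subseteq\mathrm{Conv}\big(\mathcal{C}_f(x_{\rm I})\cup\mathcal{C}_f(x_{\rm F})\big)$ if and only if $\mathcal{C}_f(x)\subseteq\mathcal{C}_{\rm IF}$.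
   Context: Fix $D>0$, $H>0$, $\beta_0>0$, $\bar P>0$. Ground users GU 1, GU 2 are at horizontal positions $x_1=-D/2$, $x_2=D/2$; for a UAV at horizontal position $x$ (altitude $H$), $h_k(x)=\beta_0/((x-x_k)^2+H^2)$. For $p_1,p_2\ge0$, $\mathcal{C}_{\rm MAC}(x,p_1,p_2)$ is the set of $(r_1,r_2)$, $r_1,r_2\ge0$, with $r_1\le\log_2(1+p_1h_1(x))$, $r_2\le\log_2(1+p_2h_2(x))$, $r_1+r_2\le\log_2(1+p_1h_1(x)+p_2h_2(x))$; the fixed-location capacity region is $\mathcal{C}_f(x)=\bigcup_{p_1,p_2\ge0,\,p_1+p_2\le\bar P}\mathcal{C}_{\rm MAC}(x,p_1,p_2)$ (a convex set). $\partial$ denotes boundary and $\mathrm{Conv}$ convex hull. *)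

theory Defs
  imports "HOL-Analysis.Analysis"
begin

text \<open>Channel gain from a UAV at horizontal position x (altitude H) to a ground user
  at horizontal position xk.\<close>
definition chan_gain :: "real \<Rightarrow> real \<Rightarrow> real \<Rightarrow> real \<Rightarrow> real" where
  "chan_gain \<beta>0 H xk x = \<beta>0 / ((x - xk)^2 + H^2)"

definition h1 :: "real \<Rightarrow> real \<Rightarrow> real \<Rightarrow> real \<Rightarrow> real" where
  "h1 D H \<beta>0 x = chan_gain \<beta>0 H (- D / 2) x"

definition h2 :: "real \<Rightarrow> real \<Rightarrow> real \<Rightarrow> real \<Rightarrow> real" where
  "h2 D H \<beta>0 x = chan_gain \<beta>0 H (D / 2) x"

definition C_MAC :: "real \<Rightarrow> real \<Rightarrow> real \<Rightarrow> real \<Rightarrow> real \<Rightarrow> real \<Rightarrow> (real \<times> real) set" where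
  "C_MAC D H \<beta>0 x p1 p2 = {(r1, r2). r1 \<ge> 0 \<and> r2 \<ge> 0 \<and>
      r1 \<le> log 2 (1 + p1 * h1 D H \<beta>0 x) \<and>
      r2 \<le> log 2 (1 + p2 * h2 D H \<beta>0 x) \<and>
      r1 + r2 \<le> log 2 (1 + p1 * h1 D H \<beta>0 x + p2 * h2 D H \<beta>0 x)}"

definition C_f :: "real \<Rightarrow> real \<Rightarrow> real \<Rightarrow> real \<Rightarrow> real \<Rightarrow> (real \<times> real) set" where
  "C_f D H \<beta>0 Pbar x =
     (\<Union>{C_MAC D H \<beta>0 x p1 p2 | p1 p2. p1 \<ge> 0 \<and> p2 \<ge> 0 \<and> p1 + p2 \<le> Pbar})"

end

theory Submission
  imports Defs
begin

text \<open>With inverse channel gains \<open>a = 1/h\<^sub>1(x)\<close>, \<open>g = 1/h\<^sub>2(x)\<close> and SNR targets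
  \<open>y = 2\<^sup>r\<^sup>1 - 1\<close>, \<open>z = 2\<^sup>r\<^sup>2 - 1\<close>, a rate pair is achievable iff
  \<open>a y + g z + min a g \<cdot> y z \<le> P\<close>. Moving from \<open>x\<^sub>I\<close> to \<open>x\<close> raises \<open>a\<close> and lowers \<open>g\<close>, and
  the boundaries of the two regions cross at most once; so a rate pair gained on the way lies
  to the upper left of the tangent point at \<open>x\<^sub>I\<close>, and symmetrically one not achievable at
  \<open>x\<^sub>F\<close> lies to the lower right of the tangent point at \<open>x\<^sub>F\<close>. A point of the region at \<open>x\<close>
  outside the hull is separated from it by a line with nonnegative normal; according to
  whether that normal is flatter or steeper than the tangent, the point would have to lie
  beyond one of the two tangent points while staying below the tangent, which is impossible.\<close>

text \<open>Least sum power \<open>p\<^sub>1 + p\<^sub>2\<close> for which \<open>C_MAC\<close> with gains \<open>1/a\<close>, \<open>1/g\<close> contains the rates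
  with SNR targets \<open>y\<close>, \<open>z\<close>: the product term is paid at the smaller inverse gain.\<close>
definition min_power :: "real \<Rightarrow> real \<Rightarrow> real \<Rightarrow> real \<Rightarrow> real" where
  "min_power a g y z = a * y + g * z + min a g * y * z"

definition rate_region :: "real \<Rightarrow> real \<Rightarrow> real \<Rightarrow> (real \<times> real) set" where
  "rate_region a g P =
     {(r1, r2). 0 \<le> r1 \<and> 0 \<le> r2 \<and> min_power a g (2 powr r1 - 1) (2 powr r2 - 1) \<le> P}"

definition nonneg_down_closed :: "(real \<times> real) set \<Rightarrow> bool" where
  "nonneg_down_closed S \<longleftrightarrow>
     (\<forall>r1 r2. (r1, r2) \<in> S \<longrightarrow> 0 \<le> r1 \<and> 0 \<le> r2 \<and> {0..r1} \<times> {0..r2} \<subseteq> S)"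

text \<open>\<open>s\<^sub>1\<close>, \<open>s\<^sub>2\<close> are the received SNRs \<open>p\<^sub>k h\<^sub>k\<close>; the MAC constraints say exactly that they
  dominate \<open>y\<close>, \<open>z\<close> and that \<open>s\<^sub>1 + s\<^sub>2\<close> covers \<open>(1 + y)(1 + z) - 1\<close>.\<close>
lemma min_power_le_split:
  assumes "0 < a" "0 < g" "0 \<le> y" "0 \<le> z" "y \<le> s1" "z \<le> s2"
    and "(1 + y) * (1 + z) \<le> 1 + s1 + s2"
  shows "min_power a g y z \<le> a * s1 + g * s2"
proof (cases "g \<le> a")
  case True
  have "min_power a g y z = a * y + g * (z + y * z)"
    using True by (simp add: min_power_def min_def algebra_simps)
  also have "\<dots> \<le> a * y + g * (s1 + s2 - y)"
    using assms by (intro add_left_mono mult_left_mono) (auto simp: algebra_simps)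
  also have "\<dots> = (a - g) * y + g * (s1 + s2)" by (simp add: algebra_simps)
  also have "\<dots> \<le> (a - g) * s1 + g * (s1 + s2)"
    using True assms by (intro add_right_mono mult_left_mono) auto
  finally show ?thesis by (simp add: algebra_simps)
next
  case False
  have "min_power a g y z = g * z + a * (y + y * z)"
    using False by (simp add: min_power_def min_def algebra_simps)
  also have "\<dots> \<le> g * z + a * (s1 + s2 - z)"
    using assms by (intro add_left_mono mult_left_mono) (auto simp: algebra_simps)
  also have "\<dots> = (g - a) * z + a * (s1 + s2)" by (simp add: algebra_simps)
  also have "\<dots> \<le> (g - a) * s2 + a * (s1 + s2)"
    using False assms by (intro add_right_mono mult_left_mono) auto
  finally show ?thesis by (simp add: algebra_simps)
qed

lemma min_power_split_attained:
  assumes "0 \<le> y" "0 \<le> z"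
  obtains s1 s2 where "y \<le> s1" "z \<le> s2" "(1 + y) * (1 + z) = 1 + s1 + s2"
    "a * s1 + g * s2 = min_power a g y z"
proof (cases "g \<le> a")
  case True
  then show ?thesis
    using that[of y "z + y * z"] assms by (simp add: min_power_def min_def algebra_simps)
next
  case False
  then show ?thesis
    using that[of "y + y * z" z] assms by (simp add: min_power_def min_def algebra_simps)
qed

lemma mac_constraints_iff_powr:
  assumes "0 \<le> s1" "0 \<le> s2"
  shows "(r1 \<le> log 2 (1 + s1) \<and> r2 \<le> log 2 (1 + s2) \<and> r1 + r2 \<le> log 2 (1 + s1 + s2))
    \<longleftrightarrow> (2 powr r1 \<le> 1 + s1 \<and> 2 powr r2 \<le> 1 + s2 \<and> 2 powr r1 * 2 powr r2 \<le> 1 + s1 + s2)"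
  using assms by (simp add: le_log_iff powr_add)

lemma C_f_eq_rate_region:
  assumes "0 < h1 D H b0 x" "0 < h2 D H b0 x"
  shows "C_f D H b0 P x = rate_region (inverse (h1 D H b0 x)) (inverse (h2 D H b0 x)) P"
    (is "_ = rate_region ?a ?g P")
proof (intro set_eqI iffI)
  have a: "0 < ?a" and g: "0 < ?g" using assms by simp_all
  fix r :: "real \<times> real"
  obtain r1 r2 where r: "r = (r1, r2)" by fastforce
  {
    assume "r \<in> C_f D H b0 P x"
    then obtain p1 p2 where p: "0 \<le> p1" "0 \<le> p2" "p1 + p2 \<le> P" "r \<in> C_MAC D H b0 x p1 p2"
      unfolding C_f_def by auto
    define s1 s2 where "s1 = p1 * h1 D H b0 x" and "s2 = p2 * h2 D H b0 x"
    have s: "0 \<le> s1" "0 \<le> s2" using p assms unfolding s1_def s2_def by auto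
    have mac: "0 \<le> r1" "0 \<le> r2" "r1 \<le> log 2 (1 + s1)" "r2 \<le> log 2 (1 + s2)"
        "r1 + r2 \<le> log 2 (1 + s1 + s2)"
      using p(4) unfolding r C_MAC_def s1_def s2_def by auto
    then have "2 powr r1 \<le> 1 + s1" "2 powr r2 \<le> 1 + s2" "2 powr r1 * 2 powr r2 \<le> 1 + s1 + s2"
      using mac_constraints_iff_powr[OF s] by auto
    then have "min_power ?a ?g (2 powr r1 - 1) (2 powr r2 - 1) \<le> ?a * s1 + ?g * s2"
      using a g mac(1,2) by (intro min_power_le_split) (auto simp: ge_one_powr_ge_zero)
    also have "?a * s1 + ?g * s2 = p1 + p2" unfolding s1_def s2_def using assms by (simp add: field_simps)
    finally show "r \<in> rate_region ?a ?g P" using p mac unfolding rate_region_def r by auto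
  next
    assume "r \<in> rate_region ?a ?g P"
    then have r_nn: "0 \<le> r1" "0 \<le> r2" and
      power: "min_power ?a ?g (2 powr r1 - 1) (2 powr r2 - 1) \<le> P"
      unfolding r rate_region_def by auto
    have snr_nn: "0 \<le> 2 powr r1 - 1" "0 \<le> 2 powr r2 - 1"
      using r_nn by (simp_all add: ge_one_powr_ge_zero)
    obtain s1 s2 where s: "2 powr r1 - 1 \<le> s1" "2 powr r2 - 1 \<le> s2"
        "(1 + (2 powr r1 - 1)) * (1 + (2 powr r2 - 1)) = 1 + s1 + s2"
        "?a * s1 + ?g * s2 = min_power ?a ?g (2 powr r1 - 1) (2 powr r2 - 1)"
      using min_power_split_attained snr_nn by blast
    have s_nn: "0 \<le> s1" "0 \<le> s2" using s(1,2) snr_nn by linarith+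
    have "r1 \<le> log 2 (1 + s1) \<and> r2 \<le> log 2 (1 + s2) \<and> r1 + r2 \<le> log 2 (1 + s1 + s2)"
      using mac_constraints_iff_powr[OF s_nn] s(1-3) by simp
    moreover have "?a * s1 * h1 D H b0 x = s1" "?g * s2 * h2 D H b0 x = s2"
      using assms by (simp_all add: field_simps)
    ultimately have "r \<in> C_MAC D H b0 x (?a * s1) (?g * s2)"
      unfolding C_MAC_def r using r_nn by (simp only: mem_Collect_eq prod.case)
    moreover have "0 \<le> ?a * s1" "0 \<le> ?g * s2" "?a * s1 + ?g * s2 \<le> P"
      using a g s_nn s(4) power by simp_all
    ultimately show "r \<in> C_f D H b0 P x" unfolding C_f_def by blast
  }
qed

lemma min_power_swap: "min_power a g y z = min_power g a z y"
  unfolding min_power_def by (simp add: min.commute algebra_simps)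

lemma rate_region_swap_iff: "(r1, r2) \<in> rate_region a g P \<longleftrightarrow> (r2, r1) \<in> rate_region g a P"
  unfolding rate_region_def using min_power_swap by auto

lemma min_power_mono:
  assumes "0 \<le> a" "a \<le> a'" "0 \<le> g" "g \<le> g'" "0 \<le> y" "y \<le> y'" "0 \<le> z" "z \<le> z'"
  shows "min_power a g y z \<le> min_power a' g' y' z'"
proof -
  have "min a g * y * z \<le> min a' g' * y' * z'"
    using assms by (intro mult_mono) auto
  moreover have "a * y \<le> a' * y'" "g * z \<le> g' * z'"
    using assms by (auto intro: mult_mono)
  ultimately show ?thesis unfolding min_power_def by linarith
qed

lemma rate_region_antimono:
  assumes "0 \<le> a" "a \<le> a'" "0 \<le> g" "g \<le> g'"
  shows "rate_region a' g' P \<subseteq> rate_region a g P"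
proof
  fix r assume "r \<in> rate_region a' g' P"
  then obtain r1 r2 where r: "r = (r1, r2)" "0 \<le> r1" "0 \<le> r2"
    "min_power a' g' (2 powr r1 - 1) (2 powr r2 - 1) \<le> P"
    unfolding rate_region_def by auto
  have "min_power a g (2 powr r1 - 1) (2 powr r2 - 1) \<le> min_power a' g' (2 powr r1 - 1) (2 powr r2 - 1)"
    using assms r by (intro min_power_mono) (auto simp: ge_one_powr_ge_zero)
  then show "r \<in> rate_region a g P" using r unfolding rate_region_def by auto
qed

lemma rate_region_nonneg_down_closed:
  assumes "0 \<le> a" "0 \<le> g"
  shows "nonneg_down_closed (rate_region a g P)"
  unfolding nonneg_down_closed_def
proof (intro allI impI conjI subsetI)
  fix r1 r2 assume r: "(r1, r2) \<in> rate_region a g P"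
  then show "0 \<le> r1" "0 \<le> r2" unfolding rate_region_def by auto
  fix s assume "s \<in> {0..r1} \<times> {0..r2}"
  then obtain s1 s2 where s: "s = (s1, s2)" "0 \<le> s1" "s1 \<le> r1" "0 \<le> s2" "s2 \<le> r2" by auto
  have "min_power a g (2 powr s1 - 1) (2 powr s2 - 1) \<le> min_power a g (2 powr r1 - 1) (2 powr r2 - 1)"
    using assms s by (intro min_power_mono) (auto simp: ge_one_powr_ge_zero)
  then show "s \<in> rate_region a g P" using r s unfolding rate_region_def by auto
qed

lemma nonneg_down_closed_Un:
  "nonneg_down_closed S \<Longrightarrow> nonneg_down_closed T \<Longrightarrow> nonneg_down_closed (S \<union> T)"
  unfolding nonneg_down_closed_def by blast

lemma rate_region_closed: "closed (rate_region a g P)"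
proof -
  have "rate_region a g P =
      {r. 0 \<le> fst r \<and> 0 \<le> snd r \<and> min_power a g (2 powr fst r - 1) (2 powr snd r - 1) \<le> P}"
    unfolding rate_region_def by auto
  also have "closed \<dots>"
    unfolding min_power_def by (intro closed_Collect_conj closed_Collect_le continuous_intros) auto
  finally show ?thesis .
qed

lemma rate_region_subset_cbox:
  assumes "0 < a" "0 < g" "0 \<le> P"
  shows "rate_region a g P \<subseteq> cbox (0, 0) (log 2 (1 + P / a), log 2 (1 + P / g))"
proof
  fix r assume "r \<in> rate_region a g P"
  then obtain r1 r2 where r: "r = (r1, r2)" "0 \<le> r1" "0 \<le> r2"
    "min_power a g (2 powr r1 - 1) (2 powr r2 - 1) \<le> P"
    unfolding rate_region_def by auto
  have "min_power a 0 (2 powr r1 - 1) 0 \<le> min_power a g (2 powr r1 - 1) (2 powr r2 - 1)"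
    "min_power 0 g 0 (2 powr r2 - 1) \<le> min_power a g (2 powr r1 - 1) (2 powr r2 - 1)"
    using assms r by (auto intro!: min_power_mono simp: ge_one_powr_ge_zero)
  then have "a * (2 powr r1 - 1) \<le> P" "g * (2 powr r2 - 1) \<le> P"
    using r(4) by (simp_all add: min_power_def)
  then have "2 powr r1 \<le> 1 + P / a" "2 powr r2 \<le> 1 + P / g"
    using assms by (simp_all add: field_simps)
  moreover have "0 < 1 + P / a" "0 < 1 + P / g" using assms by (simp_all add: add_pos_nonneg)
  ultimately show "r \<in> cbox (0, 0) (log 2 (1 + P / a), log 2 (1 + P / g))"
    using r by (simp add: cbox_Pair_eq le_log_iff)
qed

lemma rate_region_compact:
  assumes "0 < a" "0 < g" "0 \<le> P"
  shows "compact (rate_region a g P)"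
  using rate_region_closed bounded_subset[OF bounded_cbox rate_region_subset_cbox[OF assms]]
  by (simp add: compact_eq_bounded_closed)

text \<open>The power difference between \<open>(a\<^sub>2, g\<^sub>2)\<close> and \<open>(a\<^sub>1, g\<^sub>1)\<close>, divided by \<open>y z\<close>, is monotone
  in each of \<open>1/y\<close> and \<open>1/z\<close>.\<close>
lemma min_power_single_crossing:
  assumes "0 < g2" "g2 < g1" "0 < a1" "a1 \<le> a2" "0 < P"
    and "0 \<le> yq" "yq \<le> yp" "0 \<le> zp" "zp \<le> zq"
    and "min_power a2 g2 yp zp \<le> P" "P < min_power a1 g1 yp zp" "min_power a1 g1 yq zq \<le> P"
  shows "min_power a2 g2 yq zq < P"
proof -
  define diff where "diff y z = (a2 - a1) * y - (g1 - g2) * z + (min a2 g2 - min a1 g1) * y * z"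
    for y z
  have power_diff: "min_power a2 g2 y z = min_power a1 g1 y z + diff y z" for y z
    unfolding min_power_def diff_def by (simp add: algebra_simps)
  have diff_p: "diff yp zp < 0" using power_diff[of yp zp] assms by linarith
  show ?thesis
  proof (cases "yq = 0")
    case True
    then have "min_power a2 g2 yq zq = g2 * zq" "min_power a1 g1 yq zq = g1 * zq"
      by (simp_all add: min_power_def)
    moreover have "g2 * zq < g1 * zq \<or> zq = 0" using assms by auto
    ultimately show ?thesis using assms by auto
  next
    case False
    then have yq: "yq > 0" using assms by auto
    have zp: "zp > 0"
    proof (rule ccontr)
      assume "\<not> zp > 0"
      then have "diff yp zp = (a2 - a1) * yp" using assms by (simp add: diff_def)
      then show False using diff_p assms by (simp add: mult_less_0_iff)
    qed
    have yp: "yp > 0" and zq: "zq > 0" using yq zp assms by auto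
    have "diff yq zq * (yp * zp) - diff yp zp * (yq * zq)
       = (a2 - a1) * yq * yp * (zp - zq) - (g1 - g2) * zq * zp * (yp - yq)"
      unfolding diff_def by (simp add: algebra_simps)
    moreover have "(a2 - a1) * yq * yp * (zp - zq) \<le> 0"
      using assms yq yp by (intro mult_nonneg_nonpos) auto
    moreover have "(g1 - g2) * zq * zp * (yp - yq) \<ge> 0"
      using assms zq zp by (intro mult_nonneg_nonneg) auto
    moreover have "diff yp zp * (yq * zq) < 0" using diff_p yq zq by (simp add: mult_neg_pos)
    ultimately have "diff yq zq * (yp * zp) < 0" by linarith
    then have "diff yq zq < 0" using yp zp by (auto simp: mult_less_0_iff)
    then show ?thesis using power_diff[of yq zq] assms by linarith
  qed
qed

lemma rate_region_raise_snd:
  assumes "0 < a" "0 < g" "(r1, r2) \<in> rate_region a g P"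
    and "min_power a g (2 powr r1 - 1) (2 powr r2 - 1) < P"
  obtains r2' where "r2 < r2'" "(r1, r2') \<in> rate_region a g P"
proof -
  define y where "y = 2 powr r1 - 1"
  define z where "z = 2 powr r2 - 1"
  have r: "0 \<le> r1" "0 \<le> r2" using assms(3) unfolding rate_region_def by auto
  then have yz: "0 \<le> y" "0 \<le> z" unfolding y_def z_def by (auto simp: ge_one_powr_ge_zero)
  define slope where "slope = g + min a g * y"
  have slope: "slope > 0" unfolding slope_def using assms yz by (simp add: add_pos_nonneg)
  define z' where "z' = z + (P - min_power a g y z) / slope"
  have "z < z'" unfolding z'_def using assms(4) slope by (simp add: y_def z_def)
  have "min_power a g y z' = min_power a g y z + slope * (z' - z)"
    unfolding min_power_def slope_def by (simp add: algebra_simps)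
  then have power_z': "min_power a g y z' = P" unfolding z'_def using slope by simp
  define r2' where "r2' = log 2 (1 + z')"
  have pos: "0 < 1 + z'" using \<open>z < z'\<close> yz by simp
  have "2 powr r2' - 1 = z'" unfolding r2'_def using pos by simp
  moreover have "r2 < r2'"
    using \<open>z < z'\<close> pos unfolding r2'_def z_def by (simp add: less_log_iff)
  ultimately show ?thesis
    using that r power_z' unfolding rate_region_def y_def by auto
qed

text \<open>If \<open>q\<^sub>1 \<le> p\<^sub>1\<close>, single crossing puts \<open>q\<close> strictly inside the region \<open>(a\<^sub>2, g\<^sub>2)\<close>, and
  raising \<open>q\<^sub>2\<close> within that region would cross the line.\<close>
lemma rate_region_diff_fst_less:
  assumes "0 < a1" "a1 \<le> a2" "0 < g2" "g2 < g1" "0 < P" "0 \<le> ta" "0 < tb"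
    and q: "(q1, q2) \<in> rate_region a1 g1 P" "ta * q1 + tb * q2 = c"
    and below: "\<forall>r\<in>rate_region a2 g2 P. ta * fst r + tb * snd r \<le> c"
    and p: "(p1, p2) \<in> rate_region a2 g2 P" "(p1, p2) \<notin> rate_region a1 g1 P"
  shows "p1 < q1"
proof (rule ccontr)
  assume "\<not> p1 < q1"
  then have "q1 \<le> p1" by simp
  have p_below: "ta * p1 + tb * p2 \<le> c" using below p by force
  show False
  proof (cases "q2 < p2")
    case True
    then have "tb * q2 < tb * p2" using assms(7) by simp
    moreover have "ta * q1 \<le> ta * p1" using \<open>q1 \<le> p1\<close> assms(6) by (simp add: mult_left_mono)
    ultimately show False using p_below q(2) by linarith
  next
    case False
    have p_nn: "0 \<le> p1" "0 \<le> p2" and q_nn: "0 \<le> q1" "0 \<le> q2"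
      using p q unfolding rate_region_def by auto
    have strict: "min_power a2 g2 (2 powr q1 - 1) (2 powr q2 - 1) < P"
      using p q \<open>q1 \<le> p1\<close> False p_nn q_nn assms(1-5) unfolding rate_region_def
      by (intro min_power_single_crossing[where yp = "2 powr p1 - 1" and zp = "2 powr p2 - 1"])
         (auto simp: ge_one_powr_ge_zero)
    then have "(q1, q2) \<in> rate_region a2 g2 P"
      using q_nn unfolding rate_region_def by auto
    moreover have "0 < a2" using assms(1,2) by linarith
    ultimately obtain q2' where "q2 < q2'" "(q1, q2') \<in> rate_region a2 g2 P"
      using rate_region_raise_snd[OF _ assms(3) _ strict] by blast
    then have "ta * q1 + tb * q2' \<le> c" using below by force
    moreover have "tb * q2 < tb * q2'" using \<open>q2 < q2'\<close> assms(7) by simp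
    ultimately show False using q(2) by linarith
  qed
qed

lemma weighted_le_of_below_line:
  fixes w1 w2 ta tb :: real
  assumes "0 \<le> w1" "0 \<le> w2" "0 < tb" "w2 * ta \<le> w1 * tb"
    and "p1 < q1" "ta * p1 + tb * p2 \<le> ta * q1 + tb * q2"
  shows "w1 * p1 + w2 * p2 \<le> w1 * q1 + w2 * q2"
proof -
  have "w2 * ta * (q1 - p1) \<le> w1 * tb * (q1 - p1)"
    using assms by (intro mult_right_mono) auto
  moreover have "0 \<le> w2 * (ta * (q1 - p1) + tb * (q2 - p2))"
    using assms by (intro mult_nonneg_nonneg) (auto simp: algebra_simps)
  ultimately have "0 \<le> tb * (w1 * (q1 - p1) + w2 * (q2 - p2))"
    by (simp add: algebra_simps)
  then have "0 \<le> w1 * (q1 - p1) + w2 * (q2 - p2)" using assms(3) by (simp add: zero_le_mult_iff)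
  then show ?thesis by (simp add: algebra_simps)
qed

lemma rate_region_mem_of_weighted_gt:
  assumes "0 < a1" "a1 \<le> a2" "0 < g2" "g2 \<le> g1" "0 < P" "0 < ta" "0 < tb"
    and q: "(q1, q2) \<in> rate_region a1 g1 P" "ta * q1 + tb * q2 = c"
    and below: "\<forall>r\<in>rate_region a2 g2 P. ta * fst r + tb * snd r \<le> c"
    and w: "0 \<le> w1" "0 \<le> w2" "w2 * ta \<le> w1 * tb" "w1 * q1 + w2 * q2 < w1 * p1 + w2 * p2"
    and p: "(p1, p2) \<in> rate_region a2 g2 P"
  shows "(p1, p2) \<in> rate_region a1 g1 P"
proof (cases "g2 = g1")
  case True
  have "rate_region a2 g2 P \<subseteq> rate_region a1 g1 P"
    using assms(1-4) True by (intro rate_region_antimono) auto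
  then show ?thesis using p by blast
next
  case False
  show ?thesis
  proof (rule ccontr)
    assume "(p1, p2) \<notin> rate_region a1 g1 P"
    moreover have "g2 < g1" using False assms(4) by simp
    moreover have "0 \<le> ta" using assms(6) by simp
    ultimately have "p1 < q1"
      using rate_region_diff_fst_less[OF assms(1-3) _ assms(5) _ assms(7) q below p] by blast
    moreover have "ta * p1 + tb * p2 \<le> ta * q1 + tb * q2" using below p q(2) by fastforce
    ultimately have "w1 * p1 + w2 * p2 \<le> w1 * q1 + w2 * q2"
      using weighted_le_of_below_line w(1-3) assms(7) by blast
    then show False using w(4) by linarith
  qed
qed

lemma rate_region_mem_of_weighted_gt_mirror:
  assumes "0 < g1" "g1 \<le> g2" "0 < a2" "a2 \<le> a1" "0 < P" "0 < ta" "0 < tb"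
    and q: "(q1, q2) \<in> rate_region a1 g1 P" "ta * q1 + tb * q2 = c"
    and below: "\<forall>r\<in>rate_region a2 g2 P. ta * fst r + tb * snd r \<le> c"
    and w: "0 \<le> w1" "0 \<le> w2" "w1 * tb \<le> w2 * ta" "w1 * q1 + w2 * q2 < w1 * p1 + w2 * p2"
    and p: "(p1, p2) \<in> rate_region a2 g2 P"
  shows "(p1, p2) \<in> rate_region a1 g1 P"
proof -
  have below': "\<forall>r\<in>rate_region g2 a2 P. tb * fst r + ta * snd r \<le> c"
  proof
    fix r assume "r \<in> rate_region g2 a2 P"
    then have "(snd r, fst r) \<in> rate_region a2 g2 P"
      using rate_region_swap_iff[of "snd r" "fst r" a2 g2 P] by simp
    then have "ta * snd r + tb * fst r \<le> c" using below by fastforce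
    then show "tb * fst r + ta * snd r \<le> c" by linarith
  qed
  have "(q2, q1) \<in> rate_region g1 a1 P" "tb * q2 + ta * q1 = c"
    using q rate_region_swap_iff by (auto simp: add.commute)
  moreover have "w2 * q2 + w1 * q1 < w2 * p2 + w1 * p1" using w(4) by linarith
  moreover have "(p2, p1) \<in> rate_region g2 a2 P" using p rate_region_swap_iff by blast
  ultimately have "(p2, p1) \<in> rate_region g1 a1 P"
    using rate_region_mem_of_weighted_gt[OF assms(1-5,7,6) _ _ below' w(2,1)] w(3)
    by (simp add: mult.commute)
  then show ?thesis using rate_region_swap_iff by blast
qed

text \<open>Negative components of a separating direction may be replaced by zero, because \<open>S\<close>
  contains the projections of its points onto the axes.\<close>
lemma separating_nonneg_direction:
  fixes K S :: "(real \<times> real) set"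
  assumes "convex K" "closed K" "p \<notin> K" "0 \<le> fst p" "0 \<le> snd p"
    and "S \<subseteq> K" "nonneg_down_closed S"
  obtains w1 w2 where "0 \<le> w1" "0 \<le> w2"
    "\<And>q1 q2. (q1, q2) \<in> S \<Longrightarrow> w1 * q1 + w2 * q2 < w1 * fst p + w2 * snd p"
proof -
  obtain u b where sep: "inner u p < b" "\<forall>k\<in>K. b < inner u k"
    using separating_hyperplane_closed_point[OF assms(1-3)] by blast
  define v1 v2 where "v1 = - fst u" and "v2 = - snd u"
  have v_sep: "v1 * k1 + v2 * k2 < v1 * fst p + v2 * snd p" if "(k1, k2) \<in> K" for k1 k2
    using sep that unfolding v1_def v2_def by (cases u, cases p) force
  define w1 w2 where "w1 = max v1 0" and "w2 = max v2 0"
  have w_p: "v1 * fst p + v2 * snd p \<le> w1 * fst p + w2 * snd p"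
    unfolding w1_def w2_def using assms(4,5) by (intro add_mono mult_right_mono) auto
  have w_S: "w1 * q1 + w2 * q2 < v1 * fst p + v2 * snd p" if "(q1, q2) \<in> S" for q1 q2
  proof -
    define s1 s2 where "s1 = (if v1 < 0 then 0 else q1)" and "s2 = (if v2 < 0 then 0 else q2)"
    have "0 \<le> q1" "0 \<le> q2" "{0..q1} \<times> {0..q2} \<subseteq> S"
      using that assms(7) unfolding nonneg_down_closed_def by blast+
    then have "(s1, s2) \<in> S" unfolding s1_def s2_def by auto
    then have "(s1, s2) \<in> K" using assms(6) by blast
    moreover have "v1 * s1 + v2 * s2 = w1 * q1 + w2 * q2"
      unfolding s1_def s2_def w1_def w2_def by auto
    ultimately show ?thesis using v_sep by metis
  qed
  show ?thesis
  proof (rule that)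
    show "0 \<le> w1" "0 \<le> w2" unfolding w1_def w2_def by auto
  next
    fix q1 q2 assume "(q1, q2) \<in> S"
    then show "w1 * q1 + w2 * q2 < w1 * fst p + w2 * snd p" using w_S w_p by fastforce
  qed
qed

lemma rate_region_subset_hull_if_below_tangent:
  assumes "0 < aI" "aI \<le> a" "a \<le> aF" "0 < gF" "gF \<le> g" "g \<le> gI" "0 < P" "0 < ta" "0 < tb"
    and qI: "(q1I, q2I) \<in> rate_region aI gI P" "ta * q1I + tb * q2I = c"
    and qF: "(q1F, q2F) \<in> rate_region aF gF P" "ta * q1F + tb * q2F = c"
    and below: "\<forall>r\<in>rate_region a g P. ta * fst r + tb * snd r \<le> c"
  shows "rate_region a g P \<subseteq> convex hull (rate_region aI gI P \<union> rate_region aF gF P)"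
    (is "_ \<subseteq> convex hull (?A \<union> ?B)")
proof
  fix p assume p: "p \<in> rate_region a g P"
  obtain p1 p2 where p_eq: "p = (p1, p2)" by fastforce
  show "p \<in> convex hull (?A \<union> ?B)"
  proof (rule ccontr)
    assume p_out: "p \<notin> convex hull (?A \<union> ?B)"
    have "compact (convex hull (?A \<union> ?B))"
      using assms(1-7) by (intro compact_convex_hull compact_Un rate_region_compact) auto
    then have closed_hull: "closed (convex hull (?A \<union> ?B))" by (rule compact_imp_closed)
    have down: "nonneg_down_closed (?A \<union> ?B)"
      using assms(1-6) by (intro nonneg_down_closed_Un rate_region_nonneg_down_closed) auto
    have p_nn: "0 \<le> fst p" "0 \<le> snd p" using p unfolding rate_region_def by auto
    obtain w1 w2 where w: "0 \<le> w1" "0 \<le> w2"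
      "\<And>q1 q2. (q1, q2) \<in> ?A \<union> ?B \<Longrightarrow> w1 * q1 + w2 * q2 < w1 * fst p + w2 * snd p"
      by (rule separating_nonneg_direction[OF convex_convex_hull closed_hull p_out p_nn
            hull_subset down]) blast
    then have w_sep: "w1 * q1 + w2 * q2 < w1 * p1 + w2 * p2" if "(q1, q2) \<in> ?A \<union> ?B" for q1 q2
      using that unfolding p_eq by simp
    have "0 < g" "0 < a" using assms(1,2,4,5) by linarith+
    have p': "(p1, p2) \<in> rate_region a g P" using p unfolding p_eq .
    have "(p1, p2) \<in> ?A \<union> ?B"
    proof (cases "w2 * ta \<le> w1 * tb")
      case True
      have "w1 * q1I + w2 * q2I < w1 * p1 + w2 * p2" using w_sep qI(1) by blast
      then have "(p1, p2) \<in> ?A"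
        by (rule rate_region_mem_of_weighted_gt[OF assms(1,2) \<open>0 < g\<close> assms(6-9) qI below
              w(1,2) True _ p'])
      then show ?thesis by blast
    next
      case False
      then have "w1 * tb \<le> w2 * ta" by linarith
      moreover have "w1 * q1F + w2 * q2F < w1 * p1 + w2 * p2" using w_sep qF(1) by blast
      ultimately have "(p1, p2) \<in> ?B"
        by (rule rate_region_mem_of_weighted_gt_mirror[OF assms(4,5) \<open>0 < a\<close> assms(3,7-9) qF
              below w(1,2) _ _ p'])
      then show ?thesis by blast
    qed
    then have "p \<in> convex hull (?A \<union> ?B)" unfolding p_eq by (rule hull_inc)
    with p_out show False by contradiction
  qed
qed

lemma chan_gain_pos: "0 < b0 \<Longrightarrow> 0 < H \<Longrightarrow> 0 < chan_gain b0 H xk x"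
  unfolding chan_gain_def by (simp add: add_nonneg_pos)

lemma chan_gain_le_of_farther:
  assumes "0 \<le> b0" "0 < H" "\<bar>x' - xk\<bar> \<le> \<bar>x - xk\<bar>"
  shows "chan_gain b0 H xk x \<le> chan_gain b0 H xk x'"
  unfolding chan_gain_def using assms
  by (intro divide_left_mono) (auto simp: abs_le_square_iff add_nonneg_pos)

lemma inverse_h1_mono:
  assumes "0 < \<beta>0" "0 < H" "- D / 2 \<le> x" "x \<le> x'"
  shows "inverse (h1 D H \<beta>0 x) \<le> inverse (h1 D H \<beta>0 x')"
proof -
  have "h1 D H \<beta>0 x' \<le> h1 D H \<beta>0 x"
    unfolding h1_def using assms by (intro chan_gain_le_of_farther) auto
  then show ?thesis
    unfolding h1_def using assms by (intro le_imp_inverse_le) (auto intro: chan_gain_pos)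
qed

lemma inverse_h2_antimono:
  assumes "0 < \<beta>0" "0 < H" "x \<le> x'" "x' \<le> D / 2"
  shows "inverse (h2 D H \<beta>0 x') \<le> inverse (h2 D H \<beta>0 x)"
proof -
  have "h2 D H \<beta>0 x \<le> h2 D H \<beta>0 x'"
    unfolding h2_def using assms by (intro chan_gain_le_of_farther) auto
  then show ?thesis
    unfolding h2_def using assms by (intro le_imp_inverse_le) (auto intro: chan_gain_pos)
qed

lemma tangent_triangle_eq:
  fixes ta tb c r1I r2I r1F r2F :: real
  assumes "0 < tb" "ta * r1I + tb * r2I = c" "ta * r1F + tb * r2F = c" "r1I \<noteq> r1F"
  shows "(let k = (r2I - r2F) / (r1I - r1F)
        in {(r1, r2). r2 \<le> k * (r1 - r1I) + r2I \<and> r1 \<ge> 0 \<and> r2 \<ge> 0})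
       = {(r1, r2). ta * r1 + tb * r2 \<le> c \<and> r1 \<ge> 0 \<and> r2 \<ge> 0}"
proof -
  have "ta * (r1I - r1F) = - tb * (r2I - r2F)" using assms by (simp add: algebra_simps)
  then have slope: "(r2I - r2F) / (r1I - r1F) = - ta / tb" using assms by (simp add: field_simps)
  have "r2 \<le> - ta / tb * (r1 - r1I) + r2I \<longleftrightarrow> ta * r1 + tb * r2 \<le> c" for r1 r2
  proof -
    have "r2 \<le> - ta / tb * (r1 - r1I) + r2I \<longleftrightarrow> tb * r2 \<le> tb * (- ta / tb * (r1 - r1I) + r2I)"
      using assms by simp
    also have "tb * (- ta / tb * (r1 - r1I) + r2I) = - ta * (r1 - r1I) + tb * r2I"
      using assms by (simp add: field_simps)
    finally show ?thesis using assms by (simp add: algebra_simps)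
  qed
  then show ?thesis unfolding Let_def slope by auto
qed

theorem lemma5:
  fixes D H \<beta>0 Pbar xI xF x r1I r2I r1F r2F :: real
  assumes "D > 0" and "H > 0" and "\<beta>0 > 0" and "Pbar > 0"
    and "- D / 2 \<le> xI" and "xI < xF" and "xF \<le> D / 2"
    and "(r1I, r2I) \<in> frontier (C_f D H \<beta>0 Pbar xI)"
    and "(r1F, r2F) \<in> frontier (C_f D H \<beta>0 Pbar xF)"
    and "\<exists>a b c. a > 0 \<and> b > 0 \<and>
           (\<forall>r \<in> convex hull (C_f D H \<beta>0 Pbar xI \<union> C_f D H \<beta>0 Pbar xF).
              a * fst r + b * snd r \<le> c) \<and>
           a * r1I + b * r2I = c \<and> a * r1F + b * r2F = c"
    and "r1I \<noteq> r1F"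
    and "x \<in> {xI..xF}"
  shows "C_f D H \<beta>0 Pbar x \<subseteq> convex hull (C_f D H \<beta>0 Pbar xI \<union> C_f D H \<beta>0 Pbar xF)
     \<longleftrightarrow>
     C_f D H \<beta>0 Pbar x \<subseteq>
       (let k = (r2I - r2F) / (r1I - r1F)
        in {(r1, r2). r2 \<le> k * (r1 - r1I) + r2I \<and> r1 \<ge> 0 \<and> r2 \<ge> 0})"
proof -
  define a g where "a t = inverse (h1 D H \<beta>0 t)" and "g t = inverse (h2 D H \<beta>0 t)" for t
  have h_pos: "0 < h1 D H \<beta>0 t" "0 < h2 D H \<beta>0 t" for t
    unfolding h1_def h2_def using assms(2,3) by (simp_all add: chan_gain_pos)
  then have ag_pos: "0 < a t" "0 < g t" for t unfolding a_def g_def by simp_all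
  have Cf: "C_f D H \<beta>0 Pbar t = rate_region (a t) (g t) Pbar" for t
    unfolding a_def g_def using h_pos by (rule C_f_eq_rate_region)
  have mono: "a xI \<le> a x" "a x \<le> a xF" "g xF \<le> g x" "g x \<le> g xI"
    unfolding a_def g_def using assms(1-3,5,7,12)
    by (auto intro!: inverse_h1_mono inverse_h2_antimono)
  obtain ta tb c where line: "0 < ta" "0 < tb"
      "\<forall>r\<in>convex hull (rate_region (a xI) (g xI) Pbar \<union> rate_region (a xF) (g xF) Pbar).
         ta * fst r + tb * snd r \<le> c"
      "ta * r1I + tb * r2I = c" "ta * r1F + tb * r2F = c"
    using assms(10) unfolding Cf by blast
  have qI: "(r1I, r2I) \<in> rate_region (a xI) (g xI) Pbar"
    and qF: "(r1F, r2F) \<in> rate_region (a xF) (g xF) Pbar"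
    using assms(8,9) frontier_subset_closed[OF rate_region_closed] unfolding Cf by blast+
  note hull_lemma = rate_region_subset_hull_if_below_tangent[OF ag_pos(1) mono(1,2) ag_pos(2)
      mono(3,4) assms(4) line(1,2) qI line(4) qF line(5)]
  let ?X = "rate_region (a x) (g x) Pbar"
  let ?K = "convex hull (rate_region (a xI) (g xI) Pbar \<union> rate_region (a xF) (g xF) Pbar)"
  let ?T = "{(r1, r2). ta * r1 + tb * r2 \<le> c \<and> r1 \<ge> 0 \<and> r2 \<ge> 0}"
  have "?X \<subseteq> ?K \<longleftrightarrow> ?X \<subseteq> ?T"
  proof
    assume "?X \<subseteq> ?K"
    then show "?X \<subseteq> ?T" using line(3) unfolding rate_region_def by fastforce
  next
    assume "?X \<subseteq> ?T"
    then show "?X \<subseteq> ?K" by (intro hull_lemma) auto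
  qed
  then show ?thesis unfolding Cf tangent_triangle_eq[OF line(2,4,5) assms(11)] .
qed

end
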